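(* The family $\{\mathcal{T}_t\}_{t\ge0}$ of operators on $C_b(\mathbb{R}^n)$ defined by $\mathcal{T}_th(x)=\exp\{-v_t(x)\}h(\phi(t,x))$, $v_t(x)=\int_0^t\eta(\phi(r,x))dr$, is a $C_0$-semigroup. In addition, for each $t\ge0$ and every $h\in C_b(\mathbb{R}^n)$, $\mathcal{T}_tU_h(x)=U_h(x)$ for all $x\in\mathbb{R}^n$.
   Context: Let $f:\mathbb{R}^n\to\mathbb{R}^n$ be locally Lipschitz, $\dot{\mathbf{x}}=f(\mathbf{x})$ with flow $\phi(t,x)$ defined for all $t\ge0$; $f(x_{\mathrm{eq}})=0$ and $\{x_{\mathrm{eq}}\}$ is asymptotically stable and locally exponentially stable. Let $\eta:\mathbb{R}^n\to\mathbb{R}$ be continuous and positive definite w.r.t. $\{x_{\mathrm{eq}}\}$. Define $V(x)=\int_0^\infty\eta(\phi(t,x))dt\in[0,\infty]$ and, for $h\in C_b(\mathbb{R}^n)$, $U_h(x)=\exp\{-V(x)\}h(\lim_{t\to\infty}\phi(t,x))$ if $V(x)<\infty$, $U_h(x)=0$ otherwise. A $C_0$-semigroup is a family $\{\mathcal{S}_t\}_{t\ge0}$ of bounded linear operators on the function space with $\mathcal{S}_0=\mathrm{id}$, $\mathcal{S}_t\circ\mathcal{S}_s=\mathcal{S}_{t+s}$ for all $t,s\ge0$, and $\lim_{t\downarrow0}\mathcal{S}_th=h$ for all $h$. *)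

theory Defs
  imports "HOL-Analysis.Analysis"
begin

definition is_flow :: "(real^'n \<Rightarrow> real^'n) \<Rightarrow> (real \<Rightarrow> real^'n \<Rightarrow> real^'n) \<Rightarrow> bool" where
  "is_flow f phi \<longleftrightarrow> (\<forall>x. phi 0 x = x \<and>
     (\<forall>t\<ge>0. ((\<lambda>s. phi s x) has_vector_derivative f (phi t x)) (at t within {0..})))"

definition asymp_stable :: "(real \<Rightarrow> real^'n \<Rightarrow> real^'n) \<Rightarrow> real^'n \<Rightarrow> bool" where
  "asymp_stable phi xeq \<longleftrightarrow>
     (\<forall>e>0. \<exists>d>0. \<forall>x. dist x xeq < d \<longrightarrow> (\<forall>t\<ge>0. dist (phi t x) xeq < e)) \<and>
     (\<exists>d>0. \<forall>x. dist x xeq < d \<longrightarrow> ((\<lambda>t. phi t x) \<longlongrightarrow> xeq) at_top)"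

definition loc_exp_stable :: "(real \<Rightarrow> real^'n \<Rightarrow> real^'n) \<Rightarrow> real^'n \<Rightarrow> bool" where
  "loc_exp_stable phi xeq \<longleftrightarrow>
     (\<exists>d>0. \<exists>M>0. \<exists>lam>0. \<forall>x. dist x xeq < d \<longrightarrow>
        (\<forall>t\<ge>0. norm (phi t x - xeq) \<le> M * exp (- lam * t) * norm (x - xeq)))"

definition pos_def :: "(real^'n \<Rightarrow> real) \<Rightarrow> real^'n \<Rightarrow> bool" where
  "pos_def eta xeq \<longleftrightarrow> eta xeq = 0 \<and> (\<forall>x. x \<noteq> xeq \<longrightarrow> eta x > 0)"

definition vt :: "(real \<Rightarrow> real^'n \<Rightarrow> real^'n) \<Rightarrow> (real^'n \<Rightarrow> real) \<Rightarrow> real \<Rightarrow> real^'n \<Rightarrow> real" where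
  "vt phi eta t x = integral {0..t} (\<lambda>r. eta (phi r x))"

definition Tsg :: "(real \<Rightarrow> real^'n \<Rightarrow> real^'n) \<Rightarrow> (real^'n \<Rightarrow> real) \<Rightarrow> real \<Rightarrow> (real^'n \<Rightarrow> real) \<Rightarrow> real^'n \<Rightarrow> real" where
  "Tsg phi eta t h x = exp (- vt phi eta t x) * h (phi t x)"

definition Tb :: "(real \<Rightarrow> real^'n \<Rightarrow> real^'n) \<Rightarrow> (real^'n \<Rightarrow> real) \<Rightarrow> real \<Rightarrow> ((real^'n) \<Rightarrow>\<^sub>C real) \<Rightarrow> ((real^'n) \<Rightarrow>\<^sub>C real)" where
  "Tb phi eta t h = Bcontfun (Tsg phi eta t (apply_bcontfun h))"

definition Vfun :: "(real \<Rightarrow> real^'n \<Rightarrow> real^'n) \<Rightarrow> (real^'n \<Rightarrow> real) \<Rightarrow> real^'n \<Rightarrow> ennreal" where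
  "Vfun phi eta x = (\<integral>\<^sup>+ t. indicator {0..} t * ennreal (eta (phi t x)) \<partial>lborel)"

definition Ufun :: "(real \<Rightarrow> real^'n \<Rightarrow> real^'n) \<Rightarrow> (real^'n \<Rightarrow> real) \<Rightarrow> (real^'n \<Rightarrow> real) \<Rightarrow> real^'n \<Rightarrow> real" where
  "Ufun phi eta h x = (if Vfun phi eta x < \<infinity>
      then exp (- enn2real (Vfun phi eta x)) * h (Lim at_top (\<lambda>t. phi t x)) else 0)"

end

theory Submission
  imports Defs
begin

text \<open>
  T_t is the transfer semigroup of the flow killed at rate eta. The semigroup law combines the
  flow property phi t (phi s x) = phi (t + s) x with the additivity of the killing integral along
  trajectories, v_(s+t)(x) = v_t(x) + v_s(phi t x). The flow property is uniqueness of solutions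
  of a locally Lipschitz ODE, proved by a doubling estimate: two solutions inside a set where f is
  L-Lipschitz separate by at most a factor 2 over a time 1/(2L). The same estimate gives Lipschitz
  dependence on the initial value, hence joint continuity of (t, x) \<mapsto> phi t x; after rescaling
  [0,t] to [0,1] also (t, x) \<mapsto> v_t(x) and (t, x) \<mapsto> T_t h(x) are jointly continuous,
  which yields both T_t h \<in> C_b and the convergence T_t h \<rightarrow> h uniformly on compacts.
  Invariance of U_h: V(x) = v_t(x) + V(phi t x), and the trajectories through x and phi t x
  have the same limit, so exp(-v_t(x)) U_h(phi t x) = U_h(x); if V(phi t x) = \<infinity> then
  V(x) = \<infinity> and both sides vanish.
\<close>

section \<open>Uniqueness and continuous dependence for locally Lipschitz ODEs\<close>

definition ode_solution :: "('a::real_normed_vector \<Rightarrow> 'a) \<Rightarrow> (real \<Rightarrow> 'a) \<Rightarrow> real \<Rightarrow> real \<Rightarrow> bool" where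
  "ode_solution f y a b \<longleftrightarrow> (\<forall>s\<in>{a..b}. (y has_vector_derivative f (y s)) (at s within {a..b}))"

lemma ode_solution_subinterval:
  assumes "ode_solution f y a b" "a \<le> c" "d \<le> b"
  shows "ode_solution f y c d"
  using assms unfolding ode_solution_def
  by (meson atLeastAtMost_iff atLeastatMost_subset_iff has_vector_derivative_within_subset order_trans)

lemma ode_solution_continuous: "ode_solution f y a b \<Longrightarrow> continuous_on {a..b} y"
  unfolding ode_solution_def continuous_on_eq_continuous_within
  using has_vector_derivative_continuous by blast

lemma norm_increment_le_derivative_bound:
  fixes g :: "real \<Rightarrow> 'a::real_normed_vector"
  assumes "\<And>u. u \<in> {a..s} \<Longrightarrow> (g has_vector_derivative g' u) (at u within {a..s})"
    and "\<And>u. u \<in> {a..s} \<Longrightarrow> norm (g' u) \<le> B" and "a \<le> s"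
  shows "norm (g s - g a) \<le> B * (s - a)"
proof -
  have "norm (g s - g a) \<le> B * norm (s - a)"
  proof (rule differentiable_bound[of "{a..s}" g "\<lambda>u h. h *\<^sub>R g' u" B])
    fix u assume u: "u \<in> {a..s}"
    show "(g has_derivative (\<lambda>h. h *\<^sub>R g' u)) (at u within {a..s})"
      using assms(1)[OF u] by (simp add: has_vector_derivative_def)
    have "onorm (\<lambda>h. h *\<^sub>R g' u) = norm (g' u)"
      using onorm_scaleR_left[OF bounded_linear_ident] by (simp add: onorm_id)
    then show "onorm (\<lambda>h. h *\<^sub>R g' u) \<le> B" using assms(2)[OF u] by simp
  qed (use assms(3) in auto)
  then show ?thesis using assms(3) by simp
qed

lemma continuous_stays_below:
  fixes w :: "real \<Rightarrow> real"
  assumes c: "continuous_on {a..b} w" and "a \<le> b" and wa: "w a < r"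
    and step: "\<And>s. s \<in> {a..b} \<Longrightarrow> \<forall>u\<in>{a..s}. w u \<le> r \<Longrightarrow> w s < r"
  shows "\<forall>s\<in>{a..b}. w s < r"
proof (rule ccontr)
  assume out: "\<not> ?thesis"
  define E where "E = {a..b} \<inter> w -` {r..}"
  have "E \<noteq> {}" using out unfolding E_def by force
  moreover have Eb: "bdd_below E" unfolding E_def by (rule bdd_belowI[of _ a]) auto
  moreover have "closed E" unfolding E_def by (rule continuous_closed_preimage[OF c]) auto
  ultimately have mE: "Inf E \<in> E" by (rule closed_contains_Inf)
  define m where "m = Inf E"
  have below: "w u < r" if "u \<in> {a..b}" "u < m" for u
    using that cInf_lower[OF _ Eb, of u] unfolding E_def m_def by force
  have mab: "m \<in> {a..b}" using mE unfolding E_def m_def by auto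
  \<comment> \<open>At the first exit time m the value w m is still at most r, by continuity from the left.\<close>
  have "w m \<le> r"
  proof (cases "m = a")
    case False
    then have "a < m" using mab by auto
    define G where "G = {a..b} \<inter> w -` {..r}"
    have "closed G" unfolding G_def by (rule continuous_closed_preimage[OF c]) auto
    moreover have "{a..<m} \<subseteq> G" unfolding G_def using below mab by (auto simp: less_imp_le)
    ultimately have "closure {a..<m} \<subseteq> G" by (simp add: closure_minimal)
    moreover have "m \<in> closure {a..<m}" using \<open>a < m\<close> by simp
    ultimately show ?thesis unfolding G_def by blast
  qed (use wa in simp)
  then have "\<forall>u\<in>{a..m}. w u \<le> r"
    using below mab by (metis atLeastAtMost_iff le_less less_imp_le order_trans)
  then have "w m < r" using step mab by blast
  then show False using mE unfolding E_def m_def by auto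
qed

lemma ode_solutions_diff_le_twice:
  fixes y z :: "real \<Rightarrow> 'a::real_normed_vector"
  assumes sy: "ode_solution f y a b" and sz: "ode_solution f z a b" and L: "L-lipschitz_on K f"
    and yK: "\<And>u. u \<in> {a..b} \<Longrightarrow> y u \<in> K" and zK: "\<And>u. u \<in> {a..b} \<Longrightarrow> z u \<in> K"
    and "a \<le> b" and short: "(b - a) * L \<le> 1/2"
  shows "\<forall>s\<in>{a..b}. norm (y s - z s) \<le> 2 * norm (y a - z a)"
proof -
  have "0 \<le> L" using L by (simp add: lipschitz_on_def)
  have "continuous_on {a..b} (\<lambda>u. norm (y u - z u))"
    using ode_solution_continuous[OF sy] ode_solution_continuous[OF sz] by (intro continuous_intros)
  then have "\<exists>m\<in>{a..b}. \<forall>u\<in>{a..b}. norm (y u - z u) \<le> norm (y m - z m)"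
    using \<open>a \<le> b\<close> by (intro continuous_attains_sup[OF compact_Icc]) auto
  then obtain m where m: "m \<in> {a..b}" and M: "\<And>u. u \<in> {a..b} \<Longrightarrow> norm (y u - z u) \<le> norm (y m - z m)"
    by blast
  define M where "M = norm (y m - z m)"
  \<comment> \<open>The difference moves with speed at most L M, so over a time at most 1/(2L) it changes by at most M/2.\<close>
  have "norm (y s - z s) \<le> norm (y a - z a) + M / 2" if s: "s \<in> {a..b}" for s
  proof -
    have "norm ((y s - z s) - (y a - z a)) \<le> (L * M) * (s - a)"
    proof (rule norm_increment_le_derivative_bound[where g' = "\<lambda>u. f (y u) - f (z u)"])
      fix u assume u: "u \<in> {a..s}"
      then have "u \<in> {a..b}" "{a..s} \<subseteq> {a..b}" using s by auto
      then show "((\<lambda>u. y u - z u) has_vector_derivative f (y u) - f (z u)) (at u within {a..s})"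
        using sy sz unfolding ode_solution_def
        by (intro has_vector_derivative_diff) (meson has_vector_derivative_within_subset)+
      have "norm (f (y u) - f (z u)) \<le> L * norm (y u - z u)"
        using lipschitz_onD[OF L yK zK] \<open>u \<in> {a..b}\<close> by (simp add: dist_norm)
      also have "\<dots> \<le> L * M" using M \<open>u \<in> {a..b}\<close> \<open>0 \<le> L\<close> unfolding M_def by (simp add: mult_left_mono)
      finally show "norm (f (y u) - f (z u)) \<le> L * M" .
    qed (use s in auto)
    moreover have "(L * M) * (s - a) \<le> M / 2"
    proof -
      have "(s - a) * L \<le> 1/2" using s short \<open>0 \<le> L\<close> by (smt (verit) atLeastAtMost_iff mult_right_mono)
      then have "M * ((s - a) * L) \<le> M * (1/2)" by (rule mult_left_mono) (simp add: M_def)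
      then show ?thesis by (simp add: algebra_simps)
    qed
    ultimately show ?thesis using norm_triangle_ineq2[of "y s - z s" "y a - z a"] by simp
  qed
  from this[OF m] have "M \<le> 2 * norm (y a - z a)" unfolding M_def by simp
  then show ?thesis using M unfolding M_def by (meson order_trans)
qed

text \<open>Only z is required to stay in K0; y is kept inside K by a first-exit argument.\<close>

lemma ode_solutions_diff_le_twice_near:
  fixes y z :: "real \<Rightarrow> 'a::real_normed_vector"
  assumes sy: "ode_solution f y a b" and sz: "ode_solution f z a b" and L: "L-lipschitz_on K f"
    and zK0: "\<And>u. u \<in> {a..b} \<Longrightarrow> z u \<in> K0" and nbhd: "\<And>q. q \<in> K0 \<Longrightarrow> cball q r \<subseteq> K"
    and ab: "a \<le> b" and short: "(b - a) * L \<le> 1/2" and close: "2 * norm (y a - z a) < r"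
  shows "\<forall>s\<in>{a..b}. norm (y s - z s) \<le> 2 * norm (y a - z a)"
proof -
  have "0 \<le> L" using L by (simp add: lipschitz_on_def)
  have yK: "y u \<in> K" if "u \<in> {a..b}" "norm (y u - z u) \<le> r" for u
    using that nbhd[OF zK0[OF that(1)]] by (auto simp: dist_norm norm_minus_commute)
  have "0 \<le> r" using close norm_ge_zero[of "y a - z a"] by linarith
  then have zK: "z u \<in> K" if "u \<in> {a..b}" for u
    using nbhd[OF zK0[OF that]] centre_in_cball[of "z u" r] by blast
  have "continuous_on {a..b} (\<lambda>u. norm (y u - z u))"
    using ode_solution_continuous[OF sy] ode_solution_continuous[OF sz] by (intro continuous_intros)
  then have "\<forall>s\<in>{a..b}. norm (y s - z s) < r"
  proof (rule continuous_stays_below[OF _ ab])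
    show "norm (y a - z a) < r" using close norm_ge_zero[of "y a - z a"] by linarith
  next
    fix s assume s: "s \<in> {a..b}" and "\<forall>u\<in>{a..s}. norm (y u - z u) \<le> r"
    moreover have "(s - a) * L \<le> 1/2"
      using s short \<open>0 \<le> L\<close> by (smt (verit) atLeastAtMost_iff mult_right_mono)
    ultimately have "\<forall>s'\<in>{a..s}. norm (y s' - z s') \<le> 2 * norm (y a - z a)"
      using yK zK
      by (intro ode_solutions_diff_le_twice[OF ode_solution_subinterval[OF sy] ode_solution_subinterval[OF sz] L]) auto
    then have "norm (y s - z s) \<le> 2 * norm (y a - z a)" using s by simp
    then show "norm (y s - z s) < r" using close by linarith
  qed
  then show ?thesis
    using yK zK by (intro ode_solutions_diff_le_twice[OF sy sz L _ _ ab short]) (auto simp: less_imp_le)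
qed

lemma ode_solutions_diff_le_power2:
  fixes y z :: "real \<Rightarrow> 'a::real_normed_vector"
  assumes L: "L-lipschitz_on K f" and nbhd: "\<And>q. q \<in> K0 \<Longrightarrow> cball q r \<subseteq> K"
    and "0 < \<delta>" and \<delta>L: "\<delta> * L \<le> 1/2"
    and "a \<le> b" and "b - a \<le> real N * \<delta>" and "ode_solution f y a b" and "ode_solution f z a b"
    and "\<And>u. u \<in> {a..b} \<Longrightarrow> z u \<in> K0" and "2 ^ N * norm (y a - z a) < r"
  shows "norm (y b - z b) \<le> 2 ^ N * norm (y a - z a)"
  using assms(5-)
proof (induction N arbitrary: a y z)
  case 0
  then show ?case by simp
next
  case (Suc N)
  have "0 \<le> L" using L by (simp add: lipschitz_on_def)
  have grow: "2 * norm (y a - z a) \<le> 2 ^ Suc N * norm (y a - z a)"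
    by (simp add: mult_right_mono)
  show ?case
  proof (cases "b - a \<le> \<delta>")
    case True
    then have "(b - a) * L \<le> 1/2" using \<open>0 \<le> L\<close> \<delta>L by (smt (verit) mult_right_mono)
    moreover have "2 * norm (y a - z a) < r" using Suc.prems(6) grow by linarith
    ultimately have "\<forall>s\<in>{a..b}. norm (y s - z s) \<le> 2 * norm (y a - z a)"
      using ode_solutions_diff_le_twice_near[OF Suc.prems(3,4) L Suc.prems(5) nbhd Suc.prems(1)] by blast
    then have "norm (y b - z b) \<le> 2 * norm (y a - z a)" using Suc.prems(1) by simp
    then show ?thesis using grow by linarith
  next
    case False
    define c where "c = a + \<delta>"
    have ac: "a \<le> c" "c \<le> b" using False \<open>0 < \<delta>\<close> unfolding c_def by auto
    have "\<forall>s\<in>{a..c}. norm (y s - z s) \<le> 2 * norm (y a - z a)"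
    proof (rule ode_solutions_diff_le_twice_near[OF ode_solution_subinterval[OF Suc.prems(3)]
          ode_solution_subinterval[OF Suc.prems(4)] L _ nbhd ac(1)])
      show "(c - a) * L \<le> 1/2" using \<delta>L by (simp add: c_def mult.commute)
      show "2 * norm (y a - z a) < r" using Suc.prems(6) grow by linarith
    qed (use ac Suc.prems(5) in auto)
    then have "norm (y c - z c) \<le> 2 * norm (y a - z a)" using ac by simp
    then have yc: "2 ^ N * norm (y c - z c) \<le> 2 ^ Suc N * norm (y a - z a)"
      using mult_left_mono[of _ _ "2 ^ N :: real"] by simp
    have "norm (y b - z b) \<le> 2 ^ N * norm (y c - z c)"
    proof (rule Suc.IH)
      show "b - c \<le> real N * \<delta>" using Suc.prems(2) unfolding c_def by (simp add: algebra_simps)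
      show "2 ^ N * norm (y c - z c) < r" using yc Suc.prems(6) by linarith
    qed (use ac Suc.prems(5) ode_solution_subinterval[OF Suc.prems(3) ac(1) order_refl]
           ode_solution_subinterval[OF Suc.prems(4) ac(1) order_refl] in auto)
    then show ?thesis using yc by linarith
  qed
qed

text \<open>The factor 2^N, one doubling per time step \<delta>, plays the role of the exponential in
  Gronwall's inequality.\<close>

lemma ode_solutions_stay_close:
  fixes f :: "'a::euclidean_space \<Rightarrow> 'a"
  assumes "local_lipschitz (UNIV::real set) UNIV (\<lambda>_. f)" and "compact K0"
  obtains \<delta> where "0 < \<delta>"
    "\<And>N a b y z. a \<le> b \<Longrightarrow> b - a \<le> real N * \<delta> \<Longrightarrow> ode_solution f y a b \<Longrightarrow> ode_solution f z a b \<Longrightarrow>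
       (\<And>u. u \<in> {a..b} \<Longrightarrow> z u \<in> K0) \<Longrightarrow> 2 ^ N * norm (y a - z a) < 1 \<Longrightarrow>
       norm (y b - z b) \<le> 2 ^ N * norm (y a - z a)"
proof -
  define K where "K = {q + p | q p. q \<in> K0 \<and> p \<in> cball 0 1}"
  have "compact K" unfolding K_def using compact_sums[OF \<open>compact K0\<close> compact_cball] .
  have nbhd: "cball q 1 \<subseteq> K" if "q \<in> K0" for q
  proof
    fix p assume "p \<in> cball q 1"
    then have "p = q + (p - q)" "p - q \<in> cball 0 1" by (auto simp: dist_norm norm_minus_commute)
    then show "p \<in> K" using that unfolding K_def by blast
  qed
  obtain L where L: "L-lipschitz_on K f"
    using local_lipschitz_compact_implies_lipschitz[OF local_lipschitz_subset[OF assms(1)]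
        \<open>compact K\<close> compact_sing[of "0::real"]]
    by auto
  have "0 \<le> L" using L by (simp add: lipschitz_on_def)
  define \<delta> where "\<delta> = 1 / (2 * (L + 1))"
  have "0 < \<delta>" and "\<delta> * L \<le> 1/2" unfolding \<delta>_def using \<open>0 \<le> L\<close> by (auto simp: field_simps)
  show ?thesis
    by (rule that[OF \<open>0 < \<delta>\<close>]) (rule ode_solutions_diff_le_power2[OF L nbhd \<open>0 < \<delta>\<close> \<open>\<delta> * L \<le> 1/2\<close>])
qed

section \<open>Limits and integrals on the half-line\<close>

lemma uniform_limit_at_right_if_continuous_on_prod:
  fixes g :: "real \<Rightarrow> 'a::topological_space \<Rightarrow> 'b::metric_space"
  assumes "continuous_on ({a..} \<times> K) (\<lambda>(t, x). g t x)" and "compact K"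
  shows "uniform_limit K g (g a) (at_right a)"
  unfolding uniform_limit_iff
proof (intro allI impI)
  fix e :: real assume "0 < e"
  then obtain X0 where "a \<in> X0" "open X0" and X0: "\<forall>t\<in>X0 \<inter> {a..}. \<forall>x\<in>K. dist (g t x) (g a x) \<le> e / 2"
    using continuous_on_prod_compactE[OF assms, of a "e / 2"] by auto
  have "\<forall>\<^sub>F t in at_right a. t \<in> X0"
    using filter_leD[OF at_within_le_nhds eventually_nhds_in_open[OF \<open>open X0\<close> \<open>a \<in> X0\<close>]] .
  moreover have "\<forall>\<^sub>F t in at_right a. a < t" by (rule eventually_at_right_less)
  ultimately show "\<forall>\<^sub>F t in at_right a. \<forall>x\<in>K. dist (g t x) (g a x) < e"
  proof eventually_elim
    case (elim t)
    then have "\<forall>x\<in>K. dist (g t x) (g a x) \<le> e / 2" using X0 by auto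
    then show ?case using \<open>0 < e\<close> by fastforce
  qed
qed

lemma filterlim_at_top_add_const: "filterlim (\<lambda>r::real. r + c) at_top at_top"
  unfolding filterlim_at_top
proof
  fix Z :: real
  show "\<forall>\<^sub>F r in at_top. Z \<le> r + c"
    using eventually_ge_at_top[of "Z - c"] by eventually_elim simp
qed

lemma Lim_at_top_shift:
  fixes g :: "real \<Rightarrow> 'a::t2_space"
  shows "Lim at_top (\<lambda>r. g (r + t)) = Lim at_top g"
proof -
  have shift: "filtermap (\<lambda>r. r + t) at_top = at_top"
    by (rule filtermap_fun_inverse[OF filterlim_at_top_add_const[of "- t"] filterlim_at_top_add_const]) simp
  have "((\<lambda>r. g (r + t)) \<longlongrightarrow> l) at_top \<longleftrightarrow> (g \<longlongrightarrow> l) at_top" for l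
    using filterlim_filtermap[of g "nhds l" "\<lambda>r. r + t" at_top] by (simp add: shift)
  then show ?thesis unfolding t2_space_class.Lim_def by simp
qed

lemma nn_integral_Ici_split:
  fixes g :: "real \<Rightarrow> real"
  assumes g: "continuous_on {0..} g" and nonneg: "\<And>r. 0 \<le> r \<Longrightarrow> 0 \<le> g r" and "0 \<le> t"
  shows "(\<integral>\<^sup>+r. indicator {0..} r * ennreal (g r) \<partial>lborel)
    = ennreal (integral {0..t} g) + (\<integral>\<^sup>+r. indicator {0..} r * ennreal (g (r + t)) \<partial>lborel)"
proof -
  \<comment> \<open>g is only meaningful on [0,\<infinity>); G extends it continuously to a Borel function on the line.\<close>
  define G where "G r = g (max 0 r)" for r
  have "continuous_on UNIV G"
    unfolding G_def by (rule continuous_on_compose2[OF g]) (auto intro: continuous_intros)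
  then have [measurable]: "G \<in> borel_measurable borel" by (rule borel_measurable_continuous_onI)
  have G_nonneg: "0 \<le> G r" for r unfolding G_def by (simp add: nonneg)
  have "(\<integral>\<^sup>+r. indicator {0..} r * ennreal (g r) \<partial>lborel)
      = (\<integral>\<^sup>+r. indicator {0..t} r * ennreal (G r) + indicator {t<..} r * ennreal (G r) \<partial>lborel)"
    using \<open>0 \<le> t\<close> by (intro nn_integral_cong) (auto simp: G_def split: split_indicator)
  also have "\<dots> = (\<integral>\<^sup>+r. indicator {0..t} r * ennreal (G r) \<partial>lborel)
      + (\<integral>\<^sup>+r. indicator {t<..} r * ennreal (G r) \<partial>lborel)"
    by (rule nn_integral_add) auto
  also have "(\<integral>\<^sup>+r. indicator {0..t} r * ennreal (G r) \<partial>lborel) = ennreal (integral {0..t} g)"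
  proof -
    have "g integrable_on {0..t}"
      by (rule integrable_continuous_interval[OF continuous_on_subset[OF g]]) auto
    moreover have "g r = G r" if "r \<in> {0..t}" for r using that by (simp add: G_def)
    ultimately have "(G has_integral integral {0..t} g) {0..t}"
      using has_integral_eq integrable_integral by blast
    moreover have "(\<lambda>r. indicator {0..t} r * G r) = (\<lambda>r. if r \<in> {0..t} then G r else 0)"
      by (auto simp: indicator_def)
    ultimately have "((\<lambda>r. indicator {0..t} r * G r) has_integral integral {0..t} g) UNIV"
      using has_integral_restrict_UNIV[of "{0..t}" G] by simp
    then have "(\<integral>\<^sup>+r. ennreal (indicator {0..t} r * G r) \<partial>lborel) = ennreal (integral {0..t} g)"
      using G_nonneg by (intro nn_integral_has_integral_lborel) auto
    moreover have "(\<lambda>r. indicator {0..t} r * ennreal (G r)) = (\<lambda>r. ennreal (indicator {0..t} r * G r))"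
      by (auto split: split_indicator)
    ultimately show ?thesis by (simp only:)
  qed
  also have "(\<integral>\<^sup>+r. indicator {t<..} r * ennreal (G r) \<partial>lborel)
      = (\<integral>\<^sup>+r. indicator {t<..} (t + 1 * r) * ennreal (G (t + 1 * r)) \<partial>lborel)"
    using nn_integral_real_affine[of "\<lambda>r. indicator {t<..} r * ennreal (G r)" 1 t] by simp
  also have "\<dots> = (\<integral>\<^sup>+r. indicator {0..} r * ennreal (g (r + t)) \<partial>lborel)"
  proof (rule nn_integral_cong_AE)
    show "AE r in lborel. indicator {t<..} (t + 1 * r) * ennreal (G (t + 1 * r))
        = indicator {0..} r * ennreal (g (r + t))"
      using AE_lborel_singleton[of 0]
      by eventually_elim (use \<open>0 \<le> t\<close> in \<open>auto simp: G_def max_def add.commute split: split_indicator\<close>)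
  qed
  finally show ?thesis .
qed

section \<open>The flow of a locally Lipschitz vector field\<close>

locale lipschitz_flow =
  fixes f :: "real^'n \<Rightarrow> real^'n" and phi :: "real \<Rightarrow> real^'n \<Rightarrow> real^'n"
  assumes local_lipschitz_f: "local_lipschitz (UNIV::real set) UNIV (\<lambda>_. f)"
    and flow: "is_flow f phi"
begin

lemma flow_zero [simp]: "phi 0 x = x"
  using flow by (simp add: is_flow_def)

lemma flow_has_vector_derivative:
  "0 \<le> t \<Longrightarrow> ((\<lambda>s. phi s x) has_vector_derivative f (phi t x)) (at t within {0..})"
  using flow by (simp add: is_flow_def)

lemma continuous_on_flow_time: "continuous_on {0..} (\<lambda>s. phi s x)"
  unfolding continuous_on_eq_continuous_within
  by (metis atLeast_iff flow_has_vector_derivative has_vector_derivative_continuous)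

lemma ode_solution_flow:
  assumes "0 \<le> a"
  shows "ode_solution f (\<lambda>s. phi s x) a b"
  unfolding ode_solution_def
proof
  fix s assume "s \<in> {a..b}"
  then have "((\<lambda>s. phi s x) has_vector_derivative f (phi s x)) (at s within {0..})"
    using assms by (intro flow_has_vector_derivative) auto
  moreover have "{a..b} \<subseteq> {0..}" using assms by auto
  ultimately show "((\<lambda>s. phi s x) has_vector_derivative f (phi s x)) (at s within {a..b})"
    by (rule has_vector_derivative_within_subset)
qed

lemma ode_solution_flow_delayed: "ode_solution f (\<lambda>u. phi (u - s) x) s b"
  unfolding ode_solution_def
proof
  fix u assume "u \<in> {s..b}"
  have "((\<lambda>u. u - s) has_vector_derivative 1) (at u within {s..b})"
    by (auto intro!: derivative_eq_intros)
  moreover have "((\<lambda>v. phi v x) has_vector_derivative f (phi (u - s) x)) (at (u - s) within (\<lambda>u. u - s) ` {s..b})"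
    using \<open>u \<in> {s..b}\<close>
    by (intro has_vector_derivative_within_subset[OF flow_has_vector_derivative]) auto
  ultimately show "((\<lambda>u. phi (u - s) x) has_vector_derivative f (phi (u - s) x)) (at u within {s..b})"
    using vector_diff_chain_within by (fastforce simp: o_def)
qed

lemma compact_trajectory: "0 \<le> a \<Longrightarrow> compact ((\<lambda>s. phi s x) ` {a..b})"
  by (intro compact_continuous_image ode_solution_continuous[OF ode_solution_flow] compact_Icc)

text \<open>Uniqueness of solutions: both sides solve the ODE on [s, s + t] and agree at time s.\<close>

lemma flow_add:
  assumes "0 \<le> s" and "0 \<le> t"
  shows "phi t (phi s x) = phi (t + s) x"
proof -
  obtain \<delta> where "0 < \<delta>" and close: "\<And>N a b y z. a \<le> b \<Longrightarrow> b - a \<le> real N * \<delta> \<Longrightarrow>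
       ode_solution f y a b \<Longrightarrow> ode_solution f z a b \<Longrightarrow>
       (\<And>u. u \<in> {a..b} \<Longrightarrow> z u \<in> (\<lambda>u. phi u x) ` {s..s + t}) \<Longrightarrow>
       2 ^ N * norm (y a - z a) < 1 \<Longrightarrow> norm (y b - z b) \<le> 2 ^ N * norm (y a - z a)"
    using ode_solutions_stay_close[OF local_lipschitz_f compact_trajectory[OF \<open>0 \<le> s\<close>]] by metis
  have "t \<le> real (nat \<lceil>t / \<delta>\<rceil>) * \<delta>"
    using \<open>0 < \<delta>\<close> by (simp add: pos_divide_le_eq[symmetric]) linarith
  then have "norm (phi (s + t - s) (phi s x) - phi (s + t) x) \<le> 2 ^ nat \<lceil>t / \<delta>\<rceil> * norm (phi (s - s) (phi s x) - phi s x)"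
    using \<open>0 \<le> t\<close> by (intro close ode_solution_flow_delayed ode_solution_flow[OF \<open>0 \<le> s\<close>]) auto
  then show ?thesis by (simp add: add.commute)
qed

lemma flow_lipschitz_dependence:
  assumes "0 \<le> t"
  obtains C d where "0 < d"
    "\<And>x r. dist x x0 < d \<Longrightarrow> r \<in> {0..t} \<Longrightarrow> norm (phi r x - phi r x0) \<le> C * norm (x - x0)"
proof -
  obtain \<delta> where "0 < \<delta>" and close: "\<And>N a b y z. a \<le> b \<Longrightarrow> b - a \<le> real N * \<delta> \<Longrightarrow>
       ode_solution f y a b \<Longrightarrow> ode_solution f z a b \<Longrightarrow>
       (\<And>u. u \<in> {a..b} \<Longrightarrow> z u \<in> (\<lambda>u. phi u x0) ` {0..t}) \<Longrightarrow>
       2 ^ N * norm (y a - z a) < 1 \<Longrightarrow> norm (y b - z b) \<le> 2 ^ N * norm (y a - z a)"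
    using ode_solutions_stay_close[OF local_lipschitz_f compact_trajectory[OF order_refl]] by metis
  define N where "N = nat \<lceil>t / \<delta>\<rceil>"
  have "t \<le> real N * \<delta>"
    using \<open>0 < \<delta>\<close> unfolding N_def by (simp add: pos_divide_le_eq[symmetric]) linarith
  show ?thesis
  proof (rule that[of "1 / 2 ^ (N + 1)" "2 ^ N"])
    fix x r assume x: "dist x x0 < 1 / 2 ^ (N + 1)" and r: "r \<in> {0..t}"
    have "2 ^ N * norm (x - x0) < 2 ^ N * (1 / 2 ^ (N + 1))"
      using x by (intro mult_strict_left_mono) (auto simp: dist_norm)
    then have "2 ^ N * norm (x - x0) < 1" by simp
    then show "norm (phi r x - phi r x0) \<le> 2 ^ N * norm (x - x0)"
      using close[of 0 r N "\<lambda>s. phi s x" "\<lambda>s. phi s x0"] r \<open>t \<le> real N * \<delta>\<close>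
      by (auto intro: ode_solution_flow)
  qed simp
qed

lemma continuous_on_flow: "continuous_on ({0..} \<times> UNIV) (\<lambda>(t, x). phi t x)"
  unfolding continuous_on_def
proof clarsimp
  fix t0 :: real and x0 :: "real^'n" assume "0 \<le> t0"
  define F where "F = at (t0, x0) within {0..} \<times> UNIV"
  obtain C d where "0 < d"
    and C: "\<And>x r. dist x x0 < d \<Longrightarrow> r \<in> {0..t0 + 1} \<Longrightarrow> norm (phi r x - phi r x0) \<le> C * norm (x - x0)"
    by (rule flow_lipschitz_dependence[of "t0 + 1" x0]) (use \<open>0 \<le> t0\<close> in auto)
  have fst: "(fst \<longlongrightarrow> t0) F" and snd: "(snd \<longlongrightarrow> x0) F"
    unfolding F_def by (auto intro!: tendsto_eq_intros)
  have "\<forall>\<^sub>F p in F. p \<in> {0..} \<times> UNIV" unfolding F_def by (simp add: eventually_at_filter)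
  moreover have "\<forall>\<^sub>F p in F. dist (fst p) t0 < 1" using tendstoD[OF fst] by simp
  moreover have "\<forall>\<^sub>F p in F. dist (snd p) x0 < d" using tendstoD[OF snd \<open>0 < d\<close>] .
  ultimately have "\<forall>\<^sub>F p in F. norm (phi (fst p) (snd p) - phi (fst p) x0) \<le> C * norm (snd p - x0)"
    by eventually_elim (auto intro!: C simp: dist_real_def)
  moreover have "((\<lambda>p. C * norm (snd p - x0)) \<longlongrightarrow> 0) F"
    using tendsto_mult_right_zero[OF tendsto_norm_zero[OF LIM_zero[OF snd]]] .
  ultimately have "((\<lambda>p. phi (fst p) (snd p) - phi (fst p) x0) \<longlongrightarrow> 0) F"
    by (rule Lim_null_comparison)
  moreover have "((\<lambda>p. phi (fst p) x0) \<longlongrightarrow> phi t0 x0) F"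
  proof -
    have "continuous_on ({0..} \<times> UNIV) (\<lambda>p. phi (fst p) x0)"
      by (rule continuous_on_compose2[OF continuous_on_flow_time continuous_on_fst]) auto
    then show ?thesis using \<open>0 \<le> t0\<close> unfolding F_def continuous_on_def by auto
  qed
  ultimately have "((\<lambda>p. (phi (fst p) (snd p) - phi (fst p) x0) + phi (fst p) x0) \<longlongrightarrow> 0 + phi t0 x0) F"
    by (rule tendsto_add)
  then show "((\<lambda>(t, x). phi t x) \<longlongrightarrow> phi t0 x0) (at (t0, x0) within {0..} \<times> UNIV)"
    by (simp add: F_def split_beta')
qed

lemma flow_Lim_at_top:
  assumes "0 \<le> t"
  shows "Lim at_top (\<lambda>r. phi r (phi t x)) = Lim at_top (\<lambda>r. phi r x)"
proof -
  have "\<forall>\<^sub>F r in at_top. phi r (phi t x) = phi (r + t) x"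
    using eventually_ge_at_top[of 0] by eventually_elim (simp add: flow_add assms)
  then have "Lim at_top (\<lambda>r. phi r (phi t x)) = Lim at_top (\<lambda>r. phi (r + t) x)"
    by (rule Lim_cong) simp
  also have "\<dots> = Lim at_top (\<lambda>r. phi r x)" by (rule Lim_at_top_shift)
  finally show ?thesis .
qed

end

section \<open>The killed transfer semigroup\<close>

locale killed_flow = lipschitz_flow f phi for f :: "real^'n \<Rightarrow> real^'n" and phi +
  fixes eta :: "real^'n \<Rightarrow> real"
  assumes continuous_eta: "continuous_on UNIV eta"
    and eta_nonneg: "0 \<le> eta x"
begin

lemma continuous_on_eta_flow_time: "continuous_on {0..} (\<lambda>r. eta (phi r x))"
  using continuous_on_compose2[OF continuous_eta continuous_on_flow_time] by auto

lemma integrable_eta_flow: "0 \<le> a \<Longrightarrow> (\<lambda>r. eta (phi r x)) integrable_on {a..b}"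
  by (intro integrable_continuous_interval continuous_on_subset[OF continuous_on_eta_flow_time]) auto

lemma vt_nonneg: "0 \<le> vt phi eta t x"
  unfolding vt_def
  by (intro Henstock_Kurzweil_Integration.integral_nonneg integrable_eta_flow eta_nonneg) simp

text \<open>Rescaling the time interval [0,t] to [0,1] moves t out of the integration domain,
  which makes joint continuity in (t, x) a continuity-under-the-integral statement.\<close>

lemma vt_eq_rescaled:
  assumes "0 \<le> t"
  shows "vt phi eta t x = t * integral {0..1} (\<lambda>s. eta (phi (t * s) x))"
proof (cases "t = 0")
  case False
  with assms have "0 < t" by simp
  have "integral ((\<lambda>s. s / t) ` {0..t}) (\<lambda>s. eta (phi (t * s) x)) = (1 / \<bar>t\<bar>) *\<^sub>R vt phi eta t x"
    unfolding vt_def using False by (rule integral_stretch_real)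
  then show ?thesis using \<open>0 < t\<close> by simp
qed (simp add: vt_def)

lemma continuous_on_vt: "continuous_on ({0..} \<times> UNIV) (\<lambda>(t, x). vt phi eta t x)"
proof -
  let ?U = "{0..} \<times> (UNIV :: (real^'n) set)"
  have "continuous_on (?U \<times> {0..1}) (\<lambda>q. (\<lambda>(t, x). phi t x) (fst (fst q) * snd q, snd (fst q)))"
    by (rule continuous_on_compose2[OF continuous_on_flow]) (auto intro!: continuous_intros)
  then have "continuous_on (?U \<times> {0..1}) (\<lambda>q. phi (fst (fst q) * snd q) (snd (fst q)))"
    by simp
  then have "continuous_on (?U \<times> {0..1}) (\<lambda>q. eta (phi (fst (fst q) * snd q) (snd (fst q))))"
    by (rule continuous_on_compose2[OF continuous_eta]) simp
  then have "continuous_on (?U \<times> cbox 0 1) (\<lambda>(p, s). eta (phi (fst p * s) (snd p)))"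
    by (simp add: case_prod_unfold)
  then have "continuous_on ?U (\<lambda>p. integral (cbox 0 1) (\<lambda>s. eta (phi (fst p * s) (snd p))))"
    by (rule integral_continuous_on_param)
  then have "continuous_on ?U (\<lambda>p. fst p * integral {0..1} (\<lambda>s. eta (phi (fst p * s) (snd p))))"
    by (auto intro!: continuous_intros)
  then show ?thesis
    by (rule continuous_on_eq) (auto simp: vt_eq_rescaled)
qed

lemma continuous_on_Tsg:
  assumes "continuous_on UNIV h"
  shows "continuous_on ({0..} \<times> UNIV) (\<lambda>(t, x). Tsg phi eta t h x)"
proof -
  have "continuous_on ({0..} \<times> UNIV) (\<lambda>p. h ((\<lambda>(t, x). phi t x) p))"
    by (rule continuous_on_compose2[OF assms continuous_on_flow]) auto
  then have "continuous_on ({0..} \<times> UNIV)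
      (\<lambda>p. exp (- (\<lambda>(t, x). vt phi eta t x) p) * h ((\<lambda>(t, x). phi t x) p))"
    by (intro continuous_intros continuous_on_vt)
  then show ?thesis by (simp add: Tsg_def case_prod_unfold)
qed

lemma abs_Tsg_le: "\<bar>Tsg phi eta t h x\<bar> \<le> \<bar>h (phi t x)\<bar>"
proof -
  have "exp (- vt phi eta t x) \<le> 1" using vt_nonneg by simp
  then show ?thesis unfolding Tsg_def abs_mult by (simp add: mult_left_le_one_le)
qed

lemma Tsg_bcontfun:
  assumes "0 \<le> t" and "h \<in> bcontfun"
  shows "Tsg phi eta t h \<in> bcontfun"
proof -
  have h: "continuous_on UNIV h" "bounded (range h)" using assms(2) by (auto simp: bcontfun_def)
  have "continuous_on UNIV (\<lambda>x. (\<lambda>(t, x). Tsg phi eta t h x) (t, x))"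
    by (rule continuous_on_compose2[OF continuous_on_Tsg[OF h(1)]]) (use assms(1) in \<open>auto intro!: continuous_intros\<close>)
  moreover obtain B where "\<And>x. \<bar>h x\<bar> \<le> B" using h(2) by (auto simp: bounded_iff)
  then have "bounded (range (Tsg phi eta t h))"
    by (auto simp: bounded_iff intro: order_trans[OF abs_Tsg_le])
  ultimately show ?thesis by (simp add: bcontfun_def)
qed

lemma apply_Tb:
  assumes "0 \<le> t"
  shows "apply_bcontfun (Tb phi eta t h) = Tsg phi eta t (apply_bcontfun h)"
  unfolding Tb_def by (rule Bcontfun_inverse[OF Tsg_bcontfun[OF assms apply_bcontfun]])

lemma Tsg_0 [simp]: "Tsg phi eta 0 h = h"
  by (simp add: Tsg_def vt_def fun_eq_iff)

lemma vt_add: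
  assumes "0 \<le> s" and "0 \<le> t"
  shows "vt phi eta t x + vt phi eta s (phi t x) = vt phi eta (s + t) x"
proof -
  have "vt phi eta s (phi t x) = integral {0..s} (\<lambda>r. eta (phi (r + t) x))"
    unfolding vt_def using assms by (intro integral_cong) (simp add: flow_add)
  also have "\<dots> = integral {t..s + t} (\<lambda>r. eta (phi r x))"
    using integral_shift_real_ivl[where f = "\<lambda>r. eta (phi r x)" and a = t and c = t and b = "s + t"]
    by simp
  finally show ?thesis
    unfolding vt_def using assms
    by (simp add: Henstock_Kurzweil_Integration.integral_combine integrable_eta_flow)
qed

lemma Tsg_Tsg:
  assumes "0 \<le> s" and "0 \<le> t"
  shows "Tsg phi eta t (Tsg phi eta s h) = Tsg phi eta (t + s) h"
proof
  fix x
  have "Tsg phi eta t (Tsg phi eta s h) x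
      = exp (- vt phi eta t x) * exp (- vt phi eta s (phi t x)) * h (phi s (phi t x))"
    by (simp add: Tsg_def mult.assoc)
  also have "\<dots> = exp (- (vt phi eta t x + vt phi eta s (phi t x))) * h (phi (s + t) x)"
    using assms by (simp add: flow_add exp_add[symmetric])
  also have "\<dots> = Tsg phi eta (t + s) h x"
    using assms by (simp add: Tsg_def vt_add add.commute)
  finally show "Tsg phi eta t (Tsg phi eta s h) x = Tsg phi eta (t + s) h x" .
qed

lemma bounded_linear_Tb:
  assumes "0 \<le> t"
  shows "bounded_linear (Tb phi eta t)"
proof (rule bounded_linear_intro[where K = 1])
  note apply_Tb[OF assms, simp]
  fix h g :: "(real^'n) \<Rightarrow>\<^sub>C real" and c :: real
  show "Tb phi eta t (h + g) = Tb phi eta t h + Tb phi eta t g"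
    by (rule bcontfun_eqI) (simp add: Tsg_def algebra_simps)
  show "Tb phi eta t (c *\<^sub>R h) = c *\<^sub>R Tb phi eta t h"
    by (rule bcontfun_eqI) (simp add: Tsg_def)
  have "\<bar>Tsg phi eta t h x\<bar> \<le> norm h" for x
    using abs_Tsg_le norm_bounded[of h "phi t x"] by (auto intro: order_trans)
  then show "norm (Tb phi eta t h) \<le> norm h * 1"
    by (simp add: norm_bound)
qed

lemma Tb_0: "Tb phi eta 0 = id"
  by (auto simp: Tb_def apply_bcontfun_inverse)

lemma Tb_comp_Tb:
  assumes "0 \<le> s" and "0 \<le> t"
  shows "Tb phi eta t \<circ> Tb phi eta s = Tb phi eta (t + s)"
proof
  fix h
  show "(Tb phi eta t \<circ> Tb phi eta s) h = Tb phi eta (t + s) h"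
    using assms by (intro bcontfun_eqI) (simp add: apply_Tb Tsg_Tsg)
qed

lemma uniform_limit_Tb:
  assumes "compact K"
  shows "uniform_limit K (\<lambda>t. apply_bcontfun (Tb phi eta t h)) (apply_bcontfun h) (at_right 0)"
proof -
  have "continuous_on ({0..} \<times> UNIV) (\<lambda>(t, x). Tsg phi eta t h x)"
    by (rule continuous_on_Tsg[OF continuous_on_apply_bcontfun])
  then have "continuous_on ({0..} \<times> K) (\<lambda>(t, x). Tsg phi eta t h x)"
    by (rule continuous_on_subset) auto
  then have "uniform_limit K (\<lambda>t. Tsg phi eta t h) (Tsg phi eta 0 h) (at_right 0)"
    using assms by (rule uniform_limit_at_right_if_continuous_on_prod)
  moreover have "\<forall>\<^sub>F t in at_right 0. \<forall>x\<in>K. apply_bcontfun (Tb phi eta t h) x = Tsg phi eta t h x"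
    using eventually_at_right_less[of 0] by eventually_elim (simp add: apply_Tb)
  ultimately show ?thesis
    by (simp add: uniform_limit_cong)
qed

lemma Vfun_eq_vt_add:
  assumes "0 \<le> t"
  shows "Vfun phi eta x = ennreal (vt phi eta t x) + Vfun phi eta (phi t x)"
proof -
  have "Vfun phi eta x = ennreal (vt phi eta t x)
      + (\<integral>\<^sup>+r. indicator {0..} r * ennreal (eta (phi (r + t) x)) \<partial>lborel)"
    unfolding Vfun_def vt_def using continuous_on_eta_flow_time eta_nonneg assms
    by (rule nn_integral_Ici_split)
  also have "(\<integral>\<^sup>+r. indicator {0..} r * ennreal (eta (phi (r + t) x)) \<partial>lborel) = Vfun phi eta (phi t x)"
    unfolding Vfun_def using assms
    by (intro nn_integral_cong) (auto simp: flow_add split: split_indicator)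
  finally show ?thesis .
qed

lemma Tsg_Ufun:
  assumes "0 \<le> t"
  shows "Tsg phi eta t (Ufun phi eta h) x = Ufun phi eta h x"
proof (cases "Vfun phi eta (phi t x) < \<infinity>")
  case True
  have V: "Vfun phi eta x = ennreal (vt phi eta t x) + Vfun phi eta (phi t x)"
    by (rule Vfun_eq_vt_add[OF assms])
  then have "Vfun phi eta x < \<infinity>" using True by (simp add: ennreal_add_less_top)
  moreover have "enn2real (Vfun phi eta x) = vt phi eta t x + enn2real (Vfun phi eta (phi t x))"
    using V True vt_nonneg by (simp add: enn2real_plus)
  ultimately show ?thesis
    using True flow_Lim_at_top[OF assms]
    by (simp add: Tsg_def Ufun_def exp_add[symmetric] exp_minus exp_diff field_simps)
next
  case False
  then have "Vfun phi eta x = \<infinity>" using Vfun_eq_vt_add[OF assms, of x] by (simp add: less_top[symmetric])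
  then show ?thesis using False by (simp add: Tsg_def Ufun_def)
qed

end

theorem proposition1:
  fixes f :: "real^'n \<Rightarrow> real^'n" and phi :: "real \<Rightarrow> real^'n \<Rightarrow> real^'n"
    and eta :: "real^'n \<Rightarrow> real" and xeq :: "real^'n"
  assumes "local_lipschitz (UNIV::real set) UNIV (\<lambda>_. f)"
    and "is_flow f phi"
    and "f xeq = 0"
    and "asymp_stable phi xeq"
    and "loc_exp_stable phi xeq"
    and "continuous_on UNIV eta"
    and "pos_def eta xeq"
  shows "(\<forall>t\<ge>0. \<forall>h \<in> bcontfun. Tsg phi eta t h \<in> bcontfun)
    \<and> (\<forall>t\<ge>0. bounded_linear (Tb phi eta t))
    \<and> Tb phi eta 0 = id
    \<and> (\<forall>t\<ge>0. \<forall>s\<ge>0. Tb phi eta t \<circ> Tb phi eta s = Tb phi eta (t + s))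
    \<and> (\<forall>h::(real^'n) \<Rightarrow>\<^sub>C real. \<forall>K. compact K \<longrightarrow>
         uniform_limit K (\<lambda>t. apply_bcontfun (Tb phi eta t h)) (apply_bcontfun h) (at_right 0))
    \<and> (\<forall>t\<ge>0. \<forall>h \<in> bcontfun. \<forall>x. Tsg phi eta t (Ufun phi eta h) x = Ufun phi eta h x)"
proof -
  interpret killed_flow f phi eta
  proof
    show "0 \<le> eta x" for x
      using \<open>pos_def eta xeq\<close> by (cases "x = xeq") (auto simp: pos_def_def less_imp_le)
  qed (use assms in auto)
  show ?thesis
    by (simp add: Tsg_bcontfun bounded_linear_Tb Tb_0 Tb_comp_Tb uniform_limit_Tb Tsg_Ufun)
qed

end
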